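(* Let $\tau$ be any tiling of the plane by the Kari–Culik tileset $T$ described in the context, and fix any horizontal line of the grid, i.e. fix $j\in\mathbb{Z}$ and let $u=(u_k)_{k\in\mathbb{Z}}$ be the bi-infinite sequence of numerical values of the colors on the top sides of the tiles $\tau(k,j)$, $k\in\mathbb{Z}$ (with $0'$ counted as the value $0$). Then $u$ has an average: there is a real number $x$ such that the averages $\frac{1}{b-a}\sum_{k=a}^{b-1}u_k$ over finite segments $[a,b)$ converge to $x$ as the length $b-a$ tends to infinity (independently of the position of the segments).
   Context: A Wang tile is a unit square with a color on each side; a tiling of the plane assigns a tile to every cell of $\mathbb{Z}^2$ so that adjacent tiles have equal colors on their common side. The Kari–Culik tileset $T$ uses horizontal-edge (top/bottom) colors $0,0',1,2$ (with numerical values $0,0,1,2$) and vertical-edge colors from two disjoint state sets $\{s_0,s_1\}$ and $\{r_0,r_{1/3},r_{2/3}\}$. Writing a tile as (left, bottom, top, right), the 13 tiles are: $(s_0,0,0',s_0)$, $(s_1,0,0',s_1)$, $(s_0,1,2,s_0)$, $(s_1,1,2,s_1)$, $(s_0,1,1,s_1)$, $(s_1,0,1,s_0)$, $(s_1,0',1,s_0)$, $(r_0,2,1,r_{1/3})$, $(r_{1/3},2,1,r_{2/3})$, $(r_{1/3},1,0,r_0)$, $(r_{2/3},1,0,r_{1/3})$, $(r_0,1,1,r_{2/3})$, $(r_{2/3},2,0,r_0)$. *)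

theory Defs
  imports Complex_Main
begin

datatype hcol = H0 | H0' | H1 | H2
datatype vcol = S0 | S1 | R0 | R13 | R23

fun hval :: "hcol \<Rightarrow> real" where
  "hval H0 = 0" | "hval H0' = 0" | "hval H1 = 1" | "hval H2 = 2"

type_synonym tile = "vcol \<times> hcol \<times> hcol \<times> vcol"

definition left_col :: "tile \<Rightarrow> vcol" where "left_col t = fst t"
definition bottom_col :: "tile \<Rightarrow> hcol" where "bottom_col t = fst (snd t)"
definition top_col :: "tile \<Rightarrow> hcol" where "top_col t = fst (snd (snd t))"
definition right_col :: "tile \<Rightarrow> vcol" where "right_col t = snd (snd (snd t))"

definition KC_tiles :: "tile set" where
  "KC_tiles = {(S0,H0,H0',S0), (S1,H0,H0',S1), (S0,H1,H2,S0), (S1,H1,H2,S1),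
               (S0,H1,H1,S1), (S1,H0,H1,S0), (S1,H0',H1,S0),
               (R0,H2,H1,R13), (R13,H2,H1,R23), (R13,H1,H0,R0), (R23,H1,H0,R13),
               (R0,H1,H1,R23), (R23,H2,H0,R0)}"

text \<open>A tiling of the plane: cell (i,j) with i the column (horizontal) and j the row (vertical).\<close>
definition is_tiling :: "tile set \<Rightarrow> (int \<times> int \<Rightarrow> tile) \<Rightarrow> bool" where
  "is_tiling T \<tau> \<longleftrightarrow> (\<forall>i j. \<tau> (i, j) \<in> T
      \<and> right_col (\<tau> (i, j)) = left_col (\<tau> (i + 1, j))
      \<and> top_col (\<tau> (i, j)) = bottom_col (\<tau> (i, j + 1)))"

end

theory Submission
  imports Defs "HOL-Analysis.Kronecker_Approximation_Theorem"
begin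

text \<open>With the carry values \<open>carry\<close> of the vertical colours, every tile \<open>(l, b, t, r)\<close> of the
  \<open>s\<close>-part satisfies \<open>2 b + carry l = t + carry r\<close> and every tile of the \<open>r\<close>-part satisfies
  \<open>b / 3 + carry r = t + carry l\<close>; each row lies entirely in one part. Summing over a window, the
  window sums of a row are those of the row below multiplied by 2 or by 1/3, up to an error at
  most 1. Hence the lower and upper Banach means \<open>\<beta> \<le> \<alpha>\<close> of a row (which exist by Fekete's lemma)
  are both doubled or both divided by 3 from row to row, where doubling forces \<open>\<alpha> \<le> 1\<close> and
  division forces \<open>1 \<le> \<beta>\<close>. If \<open>\<beta> < \<alpha>\<close>, then on a base 6 logarithmic scale \<open>\<beta>\<close> performs an
  irrational rotation by \<open>log 6 2\<close> and so eventually enters the interval \<open>(\<beta> / \<alpha>, 1)\<close>, where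
  neither step is possible. So \<open>\<beta> = \<alpha>\<close>, and the window averages converge uniformly.\<close>

section \<open>Window sums and Banach means\<close>

definition window_sum :: "(int \<Rightarrow> real) \<Rightarrow> int \<Rightarrow> nat \<Rightarrow> real" where
  "window_sum f a L = (\<Sum>k\<in>{a..<a + int L}. f k)"

lemma window_sum_0 [simp]: "window_sum f a 0 = 0"
  by (simp add: window_sum_def)

lemma window_sum_Suc: "window_sum f a (Suc L) = window_sum f a L + f (a + int L)"
proof -
  have interval: "{a..<a + int (Suc L)} = insert (a + int L) {a..<a + int L}" by auto
  show ?thesis unfolding window_sum_def interval by simp
qed

lemma window_sum_add:
  "window_sum f a (L1 + L2) = window_sum f a L1 + window_sum f (a + int L1) L2"
  by (induction L2) (simp_all add: window_sum_Suc add.assoc)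

lemma window_sum_uminus: "window_sum (\<lambda>k. - f k) a L = - window_sum f a L"
  by (simp add: window_sum_def sum_negf)

lemma window_sum_le:
  assumes "\<And>k. f k \<le> hi"
  shows "window_sum f a L \<le> hi * real L"
  using sum_mono[of "{a..<a + int L}" f "\<lambda>_. hi"] assms by (simp add: window_sum_def mult.commute)

lemma window_sum_ge:
  assumes "\<And>k. lo \<le> f k"
  shows "lo * real L \<le> window_sum f a L"
  using sum_mono[of "{a..<a + int L}" "\<lambda>_. lo" f] assms by (simp add: window_sum_def mult.commute)

lemma window_sum_abs_le:
  assumes "\<And>k. \<bar>f k\<bar> \<le> K"
  shows "\<bar>window_sum f a L\<bar> \<le> K * real L"
proof -
  have "- K \<le> f k" and "f k \<le> K" for k
    using abs_le_D1[OF assms[of k]] abs_le_D2[OF assms[of k]] by simp_all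
  then show ?thesis
    using window_sum_ge[where lo = "- K" and f = f and a = a and L = L]
      window_sum_le[where hi = K and f = f and a = a and L = L] by (simp add: abs_le_iff)
qed

lemma window_sum_coboundary:
  assumes "\<And>k. g k = c * f k + h k - h (k + 1)"
  shows "window_sum g a L = c * window_sum f a L + h a - h (a + int L)"
  by (induction L) (simp_all add: window_sum_Suc assms algebra_simps)

lemma subadditive_mult_add_le:
  fixes M :: "nat \<Rightarrow> real"
  assumes sub: "\<And>m n. M (m + n) \<le> M m + M n"
  shows "M (q * L + r) \<le> real q * M L + M r"
proof (induction q)
  case (Suc q)
  have "M (Suc q * L + r) = M (L + (q * L + r))" by (simp add: algebra_simps)
  also have "\<dots> \<le> M L + M (q * L + r)" by (rule sub)
  finally show ?case using Suc by (simp add: algebra_simps)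
qed simp

lemma subadditive_ratio_le:
  fixes M :: "nat \<Rightarrow> real"
  assumes sub: "\<And>m n. M (m + n) \<le> M m + M n" and bnd: "\<And>n. \<bar>M n\<bar> \<le> K * real n"
    and "0 < L" "0 < n"
  shows "M n / n \<le> M L / L + 2 * K * L / n"
proof -
  define q r where "q = n div L" and "r = n mod L"
  have n: "n = q * L + r" and "r < L" using \<open>0 < L\<close> by (simp_all add: q_def r_def)
  have ratio: "\<bar>M L / L\<bar> \<le> K"
    using bnd[of L] \<open>0 < L\<close> by (simp add: abs_divide field_simps)
  have "M n \<le> real q * M L + M r" using subadditive_mult_add_le[OF sub] n by metis
  also have "real q * M L = (real n - real r) * (M L / L)"
    using \<open>0 < L\<close> n by (simp add: field_simps)
  also have "\<dots> = real n * (M L / L) - real r * (M L / L)"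
    by (rule left_diff_distrib)
  also have "\<dots> \<le> real n * (M L / L) + real r * K"
    using mult_left_mono[OF abs_le_D2[OF ratio], of "real r"] by simp
  also have "M r \<le> K * real r" using abs_le_D1[OF bnd[of r]] .
  finally have "M n \<le> real n * (M L / L) + 2 * K * real r" by simp
  also have "\<dots> \<le> real n * (M L / L) + 2 * K * real L"
    using \<open>r < L\<close> order_trans[OF abs_ge_zero ratio] by (intro add_left_mono mult_left_mono) auto
  finally show ?thesis using \<open>0 < n\<close> by (simp add: field_simps)
qed

lemma subadditive_ratio_convergent:
  fixes M :: "nat \<Rightarrow> real"
  assumes sub: "\<And>m n. M (m + n) \<le> M m + M n" and bnd: "\<And>n. \<bar>M n\<bar> \<le> K * real n"
  shows "convergent (\<lambda>n. M n / real n)"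
proof -
  define A where "A = (INF n\<in>{0<..}. M n / real n)"
  have "- K \<le> M n / real n" if "0 < n" for n
    using abs_le_D2[OF bnd[of n]] that by (simp add: field_simps)
  then have bdd: "bdd_below ((\<lambda>n. M n / real n) ` {0<..})"
    by (intro bdd_belowI2) auto
  have "(\<lambda>n. M n / real n) \<longlonglongrightarrow> A"
  proof (rule LIMSEQ_I)
    fix e :: real assume "0 < e"
    then have "A < A + e / 2" by simp
    then obtain L where L: "0 < L" "M L / L < A + e / 2"
      unfolding A_def by (subst (asm) cINF_less_iff[OF _ bdd]) auto
    have "0 \<le> K" using bnd[of 1] by simp
    obtain N :: nat where N: "4 * K * L / e < N" using reals_Archimedean2 by blast
    show "\<exists>N. \<forall>n\<ge>N. norm (M n / real n - A) < e"
    proof (intro exI allI impI)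
      fix n assume "N \<le> n"
      then have big: "4 * K * L / e < n" using N by linarith
      moreover have "0 \<le> 4 * K * L / e" using \<open>0 \<le> K\<close> \<open>0 < e\<close> by simp
      ultimately have "0 < n" by linarith
      have "4 * K * L < e * n" using big \<open>0 < e\<close> by (simp add: pos_divide_less_eq mult.commute)
      then have "2 * K * L / n < e / 2" using \<open>0 < n\<close> by (simp add: divide_less_eq)
      then have "M n / n < A + e"
        using subadditive_ratio_le[OF sub bnd \<open>0 < L\<close> \<open>0 < n\<close>] L(2) by linarith
      moreover have "A \<le> M n / n"
        unfolding A_def by (rule cINF_lower[OF bdd]) (use \<open>0 < n\<close> in simp)
      ultimately show "norm (M n / real n - A) < e" by simp
    qed
  qed
  then show ?thesis by (rule convergentI)
qed

definition max_window_sum :: "(int \<Rightarrow> real) \<Rightarrow> nat \<Rightarrow> real" where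
  "max_window_sum f L = (SUP a. window_sum f a L)"

definition upper_mean :: "(int \<Rightarrow> real) \<Rightarrow> real" where
  "upper_mean f = lim (\<lambda>L. max_window_sum f L / real L)"

definition lower_mean :: "(int \<Rightarrow> real) \<Rightarrow> real" where
  "lower_mean f = - upper_mean (\<lambda>k. - f k)"

lemma window_sum_le_max_window_sum:
  assumes "\<And>k. \<bar>f k\<bar> \<le> K"
  shows "window_sum f a L \<le> max_window_sum f L"
proof -
  have "bdd_above (range (\<lambda>a. window_sum f a L))"
    using abs_le_D1[OF window_sum_abs_le[OF assms]] by (intro bdd_aboveI2[where M = "K * real L"])
  then show ?thesis
    unfolding max_window_sum_def by (rule cSUP_upper[OF UNIV_I])
qed

lemma max_window_sum_le:
  "(\<And>a. window_sum f a L \<le> c) \<Longrightarrow> max_window_sum f L \<le> c"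
  unfolding max_window_sum_def by (rule cSUP_least) auto

lemma max_window_sum_abs_le:
  assumes "\<And>k. \<bar>f k\<bar> \<le> K"
  shows "\<bar>max_window_sum f L\<bar> \<le> K * real L"
proof -
  have "max_window_sum f L \<le> K * real L"
    by (rule max_window_sum_le, rule abs_le_D1[OF window_sum_abs_le[OF assms]])
  moreover have "- (K * real L) \<le> max_window_sum f L"
    using abs_le_D2[OF window_sum_abs_le[where f = f, OF assms, where a = 0 and L = L]]
      window_sum_le_max_window_sum[where f = f, OF assms, where a = 0 and L = L] by linarith
  ultimately show ?thesis by (simp add: abs_le_iff)
qed

lemma max_window_sum_subadditive:
  assumes "\<And>k. \<bar>f k\<bar> \<le> K"
  shows "max_window_sum f (m + n) \<le> max_window_sum f m + max_window_sum f n"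
proof (rule max_window_sum_le)
  fix a
  have "window_sum f a (m + n) = window_sum f a m + window_sum f (a + int m) n"
    by (rule window_sum_add)
  also have "\<dots> \<le> max_window_sum f m + max_window_sum f n"
    by (intro add_mono window_sum_le_max_window_sum[OF assms])
  finally show "window_sum f a (m + n) \<le> max_window_sum f m + max_window_sum f n" .
qed

lemma max_window_sum_ratio_LIMSEQ:
  assumes "\<And>k. \<bar>f k\<bar> \<le> K"
  shows "(\<lambda>L. max_window_sum f L / real L) \<longlonglongrightarrow> upper_mean f"
  unfolding upper_mean_def convergent_LIMSEQ_iff[symmetric]
  by (rule subadditive_ratio_convergent[OF max_window_sum_subadditive max_window_sum_abs_le])
    (use assms in auto)

lemma LIMSEQ_ratio_bounded_diff:
  fixes X Y :: "nat \<Rightarrow> real"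
  assumes "(\<lambda>L. X L / real L) \<longlonglongrightarrow> l" and "\<And>L. \<bar>Y L - X L\<bar> \<le> E"
  shows "(\<lambda>L. Y L / real L) \<longlonglongrightarrow> l"
proof -
  have lo: "- E \<le> Y L - X L" and hi: "Y L - X L \<le> E" for L
    using assms(2)[of L] by (simp_all add: abs_le_iff)
  have "(\<lambda>L. (Y L - X L) / real L) \<longlonglongrightarrow> 0"
  proof (rule tendsto_sandwich[OF _ _ lim_const_over_n lim_const_over_n])
    show "\<forall>\<^sub>F L in sequentially. - E / real L \<le> (Y L - X L) / real L"
      using lo by (intro always_eventually allI divide_right_mono) auto
    show "\<forall>\<^sub>F L in sequentially. (Y L - X L) / real L \<le> E / real L"
      using hi by (intro always_eventually allI divide_right_mono) auto
  qed
  from tendsto_add[OF assms(1) this] show ?thesis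
    by (simp add: diff_divide_distrib)
qed

lemma max_window_sum_scale_diff_le:
  assumes f: "\<And>k. \<bar>f k\<bar> \<le> K" and g: "\<And>k. \<bar>g k\<bar> \<le> K'" and "0 < c"
    and diff: "\<And>a. \<bar>window_sum g a L - c * window_sum f a L\<bar> \<le> E"
  shows "\<bar>max_window_sum g L - c * max_window_sum f L\<bar> \<le> E"
proof -
  have "max_window_sum g L \<le> c * max_window_sum f L + E"
  proof (rule max_window_sum_le)
    fix a
    have "window_sum g a L \<le> c * window_sum f a L + E" using abs_le_D1[OF diff[of a]] by simp
    also have "\<dots> \<le> c * max_window_sum f L + E"
      using window_sum_le_max_window_sum[where f = f, OF f] \<open>0 < c\<close> by simp
    finally show "window_sum g a L \<le> c * max_window_sum f L + E" .
  qed
  moreover have "max_window_sum f L \<le> (max_window_sum g L + E) / c"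
  proof (rule max_window_sum_le)
    fix a
    have "c * window_sum f a L \<le> window_sum g a L + E" using abs_le_D2[OF diff[of a]] by simp
    also have "\<dots> \<le> max_window_sum g L + E"
      using window_sum_le_max_window_sum[where f = g, OF g] by simp
    finally show "window_sum f a L \<le> (max_window_sum g L + E) / c"
      using \<open>0 < c\<close> by (simp add: field_simps)
  qed
  then have "c * max_window_sum f L \<le> max_window_sum g L + E"
    using \<open>0 < c\<close> by (simp add: field_simps)
  ultimately show ?thesis by (simp add: abs_le_iff)
qed

lemma upper_mean_coboundary_scale:
  assumes f: "\<And>k. \<bar>f k\<bar> \<le> K" and h: "\<And>k. \<bar>h k\<bar> \<le> B" and "0 < c"
    and g: "\<And>k. g k = c * f k + h k - h (k + 1)"
  shows "upper_mean g = c * upper_mean f"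
proof -
  have h_diff: "\<bar>h k - h l\<bar> \<le> 2 * B" for k l
  proof -
    have "\<bar>h k - h l\<bar> \<le> \<bar>h k\<bar> + \<bar>h l\<bar>" by (rule abs_triangle_ineq4)
    also have "\<dots> \<le> B + B" by (intro add_mono h)
    finally show ?thesis by simp
  qed
  have g_bnd: "\<bar>g k\<bar> \<le> c * K + 2 * B" for k
  proof -
    have "\<bar>g k\<bar> \<le> \<bar>c * f k\<bar> + \<bar>h k - h (k + 1)\<bar>"
      unfolding g add_diff_eq[symmetric] by (rule abs_triangle_ineq)
    also have "\<dots> \<le> c * K + 2 * B"
      using f[of k] \<open>0 < c\<close> by (intro add_mono h_diff) (simp add: abs_mult)
    finally show ?thesis .
  qed
  have "\<bar>window_sum g a L - c * window_sum f a L\<bar> \<le> 2 * B" for a L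
    using window_sum_coboundary[where g = g and f = f and h = h and a = a and L = L, OF g]
      h_diff[of a "a + int L"] by simp
  then have diff: "\<bar>max_window_sum g L - c * max_window_sum f L\<bar> \<le> 2 * B" for L
    by (rule max_window_sum_scale_diff_le[OF f g_bnd \<open>0 < c\<close>])
  have "(\<lambda>L. c * max_window_sum f L / real L) \<longlonglongrightarrow> c * upper_mean f"
    using tendsto_mult_left[OF max_window_sum_ratio_LIMSEQ[where f = f, OF f], of c] by simp
  then have "(\<lambda>L. max_window_sum g L / real L) \<longlonglongrightarrow> c * upper_mean f"
    using diff by (rule LIMSEQ_ratio_bounded_diff)
  with max_window_sum_ratio_LIMSEQ[where f = g, OF g_bnd] show ?thesis
    by (rule LIMSEQ_unique)
qed

lemma lower_mean_coboundary_scale: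
  assumes f: "\<And>k. \<bar>f k\<bar> \<le> K" and h: "\<And>k. \<bar>h k\<bar> \<le> B" and "0 < c"
    and g: "\<And>k. g k = c * f k + h k - h (k + 1)"
  shows "lower_mean g = c * lower_mean f"
proof -
  have "\<bar>- f k\<bar> \<le> K" and "\<bar>- h k\<bar> \<le> B" and "- g k = c * - f k + - h k - - h (k + 1)" for k
    using f[of k] h[of k] g[of k] by simp_all
  then have "upper_mean (\<lambda>k. - g k) = c * upper_mean (\<lambda>k. - f k)"
    by (rule upper_mean_coboundary_scale[where f = "\<lambda>k. - f k" and g = "\<lambda>k. - g k"
        and h = "\<lambda>k. - h k", OF _ _ \<open>0 < c\<close>])
  then show ?thesis unfolding lower_mean_def by simp
qed

lemma upper_mean_le:
  assumes "\<And>k. f k \<le> hi" and "\<And>k. \<bar>f k\<bar> \<le> K"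
  shows "upper_mean f \<le> hi"
proof (rule LIMSEQ_le_const2[OF max_window_sum_ratio_LIMSEQ[where f = f, OF assms(2)]])
  have "max_window_sum f L \<le> hi * real L" for L
    by (rule max_window_sum_le, rule window_sum_le[OF assms(1)])
  then show "\<exists>N. \<forall>L\<ge>N. max_window_sum f L / real L \<le> hi"
    by (intro exI[of _ 1]) (auto simp: divide_le_eq)
qed

lemma lower_mean_ge:
  assumes "\<And>k. lo \<le> f k" and "\<And>k. \<bar>f k\<bar> \<le> K"
  shows "lo \<le> lower_mean f"
proof -
  have "upper_mean (\<lambda>k. - f k) \<le> - lo"
    by (rule upper_mean_le[where K = K]) (use assms in auto)
  then show ?thesis unfolding lower_mean_def by simp
qed

lemma max_window_sum_uminus_le:
  assumes "\<And>k. \<bar>f k\<bar> \<le> K"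
  shows "- max_window_sum (\<lambda>k. - f k) L \<le> window_sum f a L"
proof -
  have "\<bar>- f k\<bar> \<le> K" for k using assms[of k] by simp
  from window_sum_le_max_window_sum[where f = "\<lambda>k. - f k", OF this, of a L]
  show ?thesis by (simp add: window_sum_uminus)
qed

lemma lower_mean_ratio_LIMSEQ:
  assumes "\<And>k. \<bar>f k\<bar> \<le> K"
  shows "(\<lambda>L. - max_window_sum (\<lambda>k. - f k) L / real L) \<longlonglongrightarrow> lower_mean f"
proof -
  have "\<bar>- f k\<bar> \<le> K" for k using assms[of k] by simp
  from tendsto_minus[OF max_window_sum_ratio_LIMSEQ[where f = "\<lambda>k. - f k", OF this]]
  show ?thesis unfolding lower_mean_def by simp
qed

lemma lower_mean_le_upper_mean:
  assumes "\<And>k. \<bar>f k\<bar> \<le> K"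
  shows "lower_mean f \<le> upper_mean f"
proof (rule LIMSEQ_le[OF lower_mean_ratio_LIMSEQ[where f = f, OF assms]
      max_window_sum_ratio_LIMSEQ[where f = f, OF assms]])
  have "- max_window_sum (\<lambda>k. - f k) L / real L \<le> max_window_sum f L / real L" for L
    using max_window_sum_uminus_le[where f = f, OF assms, where a = 0 and L = L]
      window_sum_le_max_window_sum[where f = f, OF assms, where a = 0 and L = L]
    by (intro divide_right_mono) simp_all
  then show "\<exists>N. \<forall>L\<ge>N. - max_window_sum (\<lambda>k. - f k) L / real L \<le> max_window_sum f L / real L"
    by blast
qed

lemma window_average_uniformly_convergent:
  assumes "\<And>k. \<bar>f k\<bar> \<le> K" and "lower_mean f = upper_mean f" and "0 < e"
  shows "\<exists>N. \<forall>a L. N \<le> L \<longrightarrow> \<bar>window_sum f a L / real L - upper_mean f\<bar> < e"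
proof -
  obtain N1 where N1: "\<And>L. N1 \<le> L \<Longrightarrow> \<bar>max_window_sum f L / real L - upper_mean f\<bar> < e"
    using LIMSEQ_D[OF max_window_sum_ratio_LIMSEQ[where f = f, OF assms(1)] \<open>0 < e\<close>] by auto
  obtain N2 where N2: "\<And>L. N2 \<le> L \<Longrightarrow> \<bar>- max_window_sum (\<lambda>k. - f k) L / real L - upper_mean f\<bar> < e"
    using LIMSEQ_D[OF lower_mean_ratio_LIMSEQ[where f = f, OF assms(1)] \<open>0 < e\<close>] assms(2) by auto
  have "\<bar>window_sum f a L / real L - upper_mean f\<bar> < e" if "max N1 N2 \<le> L" for a L
  proof -
    have "- max_window_sum (\<lambda>k. - f k) L / real L \<le> window_sum f a L / real L"
      and "window_sum f a L / real L \<le> max_window_sum f L / real L"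
      using max_window_sum_uminus_le[where f = f, OF assms(1), where a = a and L = L]
        window_sum_le_max_window_sum[where f = f, OF assms(1), where a = a and L = L]
      by (simp_all only: divide_right_mono of_nat_0_le_iff)
    then show ?thesis using N1[of L] N2[of L] that by (simp add: abs_less_iff)
  qed
  then show ?thesis by blast
qed


lemma interval_average_uniformly_convergent:
  assumes "\<And>k. \<bar>f k\<bar> \<le> K" and "lower_mean f = upper_mean f" and "0 < e"
  shows "\<exists>N::int. 0 < N \<and> (\<forall>a b. N \<le> b - a \<longrightarrow>
           \<bar>(\<Sum>k\<in>{a..<b}. f k) / real_of_int (b - a) - upper_mean f\<bar> < e)"
proof -
  obtain N where N: "\<And>a L. N \<le> L \<Longrightarrow> \<bar>window_sum f a L / real L - upper_mean f\<bar> < e"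
    using window_average_uniformly_convergent[OF assms] by blast
  have "\<bar>(\<Sum>k\<in>{a..<b}. f k) / real_of_int (b - a) - upper_mean f\<bar> < e"
    if "int N + 1 \<le> b - a" for a b
  proof -
    define L where "L = nat (b - a)"
    have "N \<le> L" and b: "a + int L = b" and "real_of_int (b - a) = real L"
      using that by (simp_all add: L_def)
    moreover have "window_sum f a L = (\<Sum>k\<in>{a..<b}. f k)"
      unfolding window_sum_def b ..
    ultimately show ?thesis using N[of L a] by simp
  qed
  then show ?thesis by (intro exI[of _ "int N + 1"]) auto
qed

section \<open>Doubling and division by three\<close>

lemma log_6_2_irrational: "log 6 2 \<notin> (\<rat> :: real set)"
proof
  assume "log 6 2 \<in> (\<rat> :: real set)"
  then obtain a b :: int where "0 < b" and ab0: "log 6 2 = real_of_int a / real_of_int b"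
    by (metis Rats_cases')
  define b' where "b' = nat b"
  from \<open>0 < b\<close> ab0 have "0 < b'" and ab: "log 6 2 = real_of_int a / real b'"
    by (simp_all add: b'_def)
  have "0 < log 6 (2::real)" by simp
  with ab \<open>0 < b'\<close> have "0 < a" by (simp add: zero_less_divide_iff)
  have "real b' * ln 2 = real_of_int a * ln 6"
    using ab \<open>0 < b'\<close> by (simp add: log_def field_simps)
  then have "ln ((2::real) ^ b') = ln (6 ^ nat a)"
    using \<open>0 < a\<close> by (simp add: ln_realpow)
  then have "real (2 ^ b') = real (6 ^ nat a)" by simp
  then have "(2::nat) ^ b' = 6 ^ nat a" by (simp only: of_nat_eq_iff)
  moreover have "3 dvd (6::nat) ^ nat a"
    using \<open>0 < a\<close> by (intro dvd_trans[OF _ dvd_power[of "nat a"]]) auto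
  ultimately have dvd: "3 dvd (2::nat) ^ b'" by simp
  have "coprime (3::nat) (2 ^ b')" by simp
  with coprime_absorb_left[OF dvd] show False by simp
qed

lemma log_6_2_bounds: "1 / 4 < log 6 (2::real)" "log 6 (2::real) < 1 / 2"
proof -
  have "ln (16::real) = 4 * ln 2" and "ln (4::real) = 2 * ln 2"
    using ln_realpow[of 2 4] ln_realpow[of 2 2] by simp_all
  moreover have "ln (6::real) < ln 16" and "ln (4::real) < ln 6" by simp_all
  ultimately have "ln 6 < 4 * ln (2::real)" and "2 * ln 2 < ln (6::real)" by simp_all
  then show "1 / 4 < log 6 (2::real)" "log 6 (2::real) < 1 / 2"
    by (simp_all add: log_def field_simps)
qed

text \<open>Modulo 1 the orbit is \<open>t 0 + n \<theta>\<close>, and the window has length 1, so it suffices that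
  Kronecker's theorem brings \<open>frac (k \<theta>)\<close> close to the midpoint of \<open>(-\<epsilon>, 0)\<close> shifted by \<open>- t 0\<close>.\<close>

lemma rotation_orbit_enters_left_of_zero:
  fixes t :: "nat \<Rightarrow> real"
  assumes "\<theta> \<notin> \<rat>" and "0 < c" "c < 1" "0 < \<epsilon>"
    and step: "\<And>n. t (Suc n) - t n - \<theta> \<in> \<int>"
    and window: "\<And>n. c - 1 \<le> t n \<and> t n \<le> c"
  shows "\<exists>n. - \<epsilon> < t n \<and> t n < 0"
proof -
  have orbit: "t n - t 0 - real n * \<theta> \<in> \<int>" for n
  proof (induction n)
    case (Suc n)
    have "t (Suc n) - t 0 - real (Suc n) * \<theta> = (t (Suc n) - t n - \<theta>) + (t n - t 0 - real n * \<theta>)"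
      by (simp add: algebra_simps)
    then show ?case using Suc step[of n] by (metis Ints_add)
  qed simp
  define l where "l = min \<epsilon> (1 - c)"
  have "0 < l" "l \<le> \<epsilon>" "l \<le> 1 - c" using assms unfolding l_def by auto
  obtain k where "\<bar>frac (real k * \<theta>) - frac (- l / 2 - t 0)\<bar> < l / 2"
    using Kronecker_approx_1_explicit[OF \<open>\<theta> \<notin> \<rat>\<close>, of "frac (- l / 2 - t 0)" "l / 2"]
      frac_ge_0 frac_lt_1[THEN less_imp_le] \<open>0 < l\<close> by auto
  then obtain d where d: "\<bar>d\<bar> < l / 2" and "d = frac (real k * \<theta>) - frac (- l / 2 - t 0)"
    by blast
  then have "t k + l / 2 - d = (t k - t 0 - real k * \<theta>) + of_int \<lfloor>real k * \<theta>\<rfloor> - of_int \<lfloor>- l / 2 - t 0\<rfloor>"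
    by (simp add: frac_def algebra_simps)
  also have "\<dots> \<in> \<int>" by (rule Ints_diff[OF Ints_add[OF orbit Ints_of_int] Ints_of_int])
  finally obtain m :: int where tk: "t k = of_int m - l / 2 + d"
    by (auto elim!: Ints_cases simp: algebra_simps)
  have "m = 0"
  proof -
    have "real_of_int m < 1" using tk d window[of k] \<open>l \<le> 1 - c\<close>
      unfolding abs_less_iff by linarith
    moreover have "- 1 < real_of_int m" using tk d window[of k] \<open>0 < c\<close>
      unfolding abs_less_iff by linarith
    ultimately show "m = 0" by linarith
  qed
  with tk d \<open>l \<le> \<epsilon>\<close> have "- \<epsilon> < t k \<and> t k < 0"
    unfolding abs_less_iff by simp
  then show ?thesis ..
qed

text \<open>On a logarithmic scale with base 6, doubling is the rotation by \<open>log 6 2\<close> and division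
  by 3 is the same rotation shifted by \<open>-1\<close>.\<close>

lemma double_or_third_orbit_approaches_one:
  fixes x :: "nat \<Rightarrow> real"
  assumes step: "\<And>n. x (Suc n) = 2 * x n \<or> x (Suc n) = x n / 3"
    and range: "\<And>n. 1 / 3 \<le> x n \<and> x n \<le> 2"
    and "0 < \<rho>" "\<rho> < 1"
  shows "\<exists>n. \<rho> < x n \<and> x n < 1"
proof -
  define \<theta> :: real where "\<theta> = log 6 2"
  define t where "t n = log 6 (x n)" for n
  have pos: "0 < x n" for n using range[of n] by linarith
  have log_3: "log 6 3 = 1 - \<theta>"
    using log_mult[of 6 2 3] unfolding \<theta>_def by simp
  have rotation: "t (Suc n) - t n - \<theta> \<in> \<int>" for n
    using step[of n]
  proof
    assume "x (Suc n) = 2 * x n"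
    then have "t (Suc n) - t n - \<theta> = 0"
      using pos[of n] log_mult[of 6 2 "x n"] unfolding t_def \<theta>_def by simp
    then show ?thesis by simp
  next
    assume third: "x (Suc n) = x n / 3"
    have "t (Suc n) - t n - \<theta> = - 1"
      using pos[of n] log_divide[of 6 "x n" 3] log_3 unfolding t_def third by simp
    then show ?thesis by simp
  qed
  have window: "\<theta> - 1 \<le> t n \<and> t n \<le> \<theta>" for n
  proof -
    have "log 6 (1 / 3) \<le> t n" "t n \<le> log 6 2"
      using range[of n] pos[of n] unfolding t_def by (subst log_le_cancel_iff; simp)+
    moreover have "log 6 (1 / 3) = \<theta> - 1"
      using log_divide[of 6 1 3] log_3 by simp
    ultimately show ?thesis unfolding \<theta>_def by simp
  qed
  have "0 < \<theta>" "\<theta> < 1" using log_6_2_bounds unfolding \<theta>_def by auto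
  moreover have "0 < - log 6 \<rho>" using \<open>0 < \<rho>\<close> \<open>\<rho> < 1\<close> by simp
  ultimately obtain n where "- (- log 6 \<rho>) < t n" "t n < 0"
    using rotation_orbit_enters_left_of_zero[where t = t and c = \<theta>,
        OF log_6_2_irrational[folded \<theta>_def] _ _ _ rotation window] by blast
  then have "\<rho> < x n" "x n < 1"
    using \<open>0 < \<rho>\<close> pos[of n] unfolding t_def by simp_all
  then show ?thesis by blast
qed

definition double_or_third_step :: "real \<Rightarrow> real \<Rightarrow> real \<Rightarrow> real \<Rightarrow> bool" where
  "double_or_third_step x y x' y' \<longleftrightarrow>
     (y \<le> 1 \<and> x' = 2 * x \<and> y' = 2 * y) \<or> (1 \<le> x \<and> y \<le> 2 \<and> x' = x / 3 \<and> y' = y / 3)"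

lemma double_or_third_orbit_below_one:
  fixes x y :: "nat \<Rightarrow> real"
  assumes step: "\<And>n. double_or_third_step (x n) (y n) (x (Suc n)) (y (Suc n))"
    and small: "\<And>n. x n < 1"
  shows "x n = 2 ^ n * x 0 \<and> y n = 2 ^ n * y 0 \<and> y n \<le> 1"
proof (induction n)
  case 0
  show ?case using step[of 0] small[of 0] by (auto simp: double_or_third_step_def)
next
  case (Suc n)
  show ?case using step[of n] step[of "Suc n"] small[of n] small[of "Suc n"] Suc
    by (auto simp: double_or_third_step_def)
qed

lemma nonpos_if_pow2_mult_bounded:
  fixes a :: real
  assumes "\<And>n. 2 ^ n * a \<le> B"
  shows "a \<le> 0"
proof (rule ccontr)
  assume "\<not> a \<le> 0"
  obtain n where "B / a < 2 ^ n" using real_arch_pow[of 2 "B / a"] by auto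
  with \<open>\<not> a \<le> 0\<close> have "B < 2 ^ n * a" by (simp add: field_simps)
  with assms[of n] show False by simp
qed

lemma double_or_third_orbit_ratio:
  fixes x y :: "nat \<Rightarrow> real"
  assumes step: "\<And>n. double_or_third_step (x n) (y n) (x (Suc n)) (y (Suc n))"
    and "0 < x 0"
  shows "0 < x n \<and> y n = y 0 / x 0 * x n"
proof (induction n)
  case (Suc n)
  from step[of n] show ?case unfolding double_or_third_step_def
  proof (elim disjE conjE)
    assume "x (Suc n) = 2 * x n" "y (Suc n) = 2 * y n"
    with Suc show ?case by simp
  next
    assume x_third: "x (Suc n) = x n / 3" and y_third: "y (Suc n) = y n / 3"
    show ?case unfolding x_third y_third using Suc by simp
  qed
qed (use \<open>0 < x 0\<close> in simp)

lemma double_or_third_orbit_eventually_above_third: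
  fixes x y :: "nat \<Rightarrow> real"
  assumes step: "\<And>n. double_or_third_step (x n) (y n) (x (Suc n)) (y (Suc n))"
    and "0 < x 0" and bounded: "\<And>n. x n \<le> 2"
  obtains n0 where "\<And>n. 1 / 3 \<le> x (n0 + n)"
proof -
  obtain n0 where n0: "1 / 3 \<le> x n0"
  proof (rule ccontr)
    assume "\<not> thesis"
    then have "x n < 1" for n using that[of n] by linarith
    then have "2 ^ n * x 0 \<le> 2" for n
      using double_or_third_orbit_below_one[where x = x and y = y, OF step] bounded by metis
    with \<open>0 < x 0\<close> show False using nonpos_if_pow2_mult_bounded by force
  qed
  have "1 / 3 \<le> x (n0 + n)" for n
  proof (induction n)
    case (Suc n)
    then show ?case using step[of "n0 + n"] by (auto simp: double_or_third_step_def)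
  qed (use n0 in simp)
  then show ?thesis by (rule that)
qed

lemma double_or_third_orbit_from_zero:
  fixes x y :: "nat \<Rightarrow> real"
  assumes step: "\<And>n. double_or_third_step (x n) (y n) (x (Suc n)) (y (Suc n))"
    and "x 0 = 0"
  shows "y 0 \<le> 0"
proof -
  have "x n = 0" for n
  proof (induction n)
    case (Suc n)
    then show ?case using step[of n] by (auto simp: double_or_third_step_def)
  qed (use \<open>x 0 = 0\<close> in simp)
  then have small: "x n < 1" for n by simp
  have "2 ^ n * y 0 \<le> 1" for n
    using double_or_third_orbit_below_one[where x = x and y = y, OF step small, of n] by simp
  then show "y 0 \<le> 0" by (rule nonpos_if_pow2_mult_bounded)
qed

lemma double_or_third_orbit_no_gap:
  fixes x y :: "nat \<Rightarrow> real"
  assumes step: "\<And>n. double_or_third_step (x n) (y n) (x (Suc n)) (y (Suc n))"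
    and "0 < x 0" "x 0 < y 0"
  shows False
proof -
  define r where "r = y 0 / x 0"
  have "1 < r" using \<open>0 < x 0\<close> \<open>x 0 < y 0\<close> by (simp add: r_def)
  have ratio: "0 < x n" "y n = r * x n" for n
    using double_or_third_orbit_ratio[where x = x and y = y, OF step \<open>0 < x 0\<close>, of n]
    unfolding r_def by auto
  have x_le_y: "x n \<le> y n" for n using ratio[of n] \<open>1 < r\<close> by simp
  have bounded: "x n \<le> 2" for n
    using step[of n] x_le_y[of n] by (auto simp: double_or_third_step_def)
  obtain n0 where above: "\<And>n. 1 / 3 \<le> x (n0 + n)"
    using double_or_third_orbit_eventually_above_third[OF step \<open>0 < x 0\<close> bounded] by blast
  have "x (n0 + Suc n) = 2 * x (n0 + n) \<or> x (n0 + Suc n) = x (n0 + n) / 3" for n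
    using step[of "n0 + n"] by (auto simp: double_or_third_step_def)
  moreover have "1 / 3 \<le> x (n0 + n) \<and> x (n0 + n) \<le> 2" for n
    using above[of n] bounded by simp
  moreover have "0 < 1 / r" "1 / r < 1" using \<open>1 < r\<close> by simp_all
  ultimately obtain n where "1 / r < x (n0 + n)" "x (n0 + n) < 1"
    using double_or_third_orbit_approaches_one[where x = "\<lambda>n. x (n0 + n)"] by blast
  moreover have "1 < y (n0 + n)"
    using calculation ratio[of "n0 + n"] \<open>1 < r\<close> by (simp add: field_simps)
  ultimately show False
    using step[of "n0 + n"] by (auto simp: double_or_third_step_def)
qed

lemma double_or_third_pair_collapse:
  fixes x y :: "nat \<Rightarrow> real"
  assumes "0 \<le> x 0" "x 0 \<le> y 0"
    and step: "\<And>n. double_or_third_step (x n) (y n) (x (Suc n)) (y (Suc n))"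
  shows "x 0 = y 0"
  using double_or_third_orbit_from_zero[where x = x and y = y, OF step]
    double_or_third_orbit_no_gap[where x = x and y = y, OF step] assms(1,2)
  by fastforce


section \<open>The Kari--Culik tileset\<close>

definition KC_double_tiles :: "tile set" where
  "KC_double_tiles = {(S0,H0,H0',S0), (S1,H0,H0',S1), (S0,H1,H2,S0), (S1,H1,H2,S1),
                      (S0,H1,H1,S1), (S1,H0,H1,S0), (S1,H0',H1,S0)}"

definition KC_third_tiles :: "tile set" where
  "KC_third_tiles = {(R0,H2,H1,R13), (R13,H2,H1,R23), (R13,H1,H0,R0), (R23,H1,H0,R13),
                     (R0,H1,H1,R23), (R23,H2,H0,R0)}"

fun carry :: "vcol \<Rightarrow> real" where
  "carry S0 = 0" | "carry S1 = 1" | "carry R0 = 0" | "carry R13 = 1 / 3" | "carry R23 = 2 / 3"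

lemma KC_tiles_split: "KC_tiles = KC_double_tiles \<union> KC_third_tiles"
  unfolding KC_tiles_def KC_double_tiles_def KC_third_tiles_def by auto

lemma carry_abs_le: "\<bar>carry v\<bar> \<le> 1"
  by (cases v) auto

lemma hval_bounds: "0 \<le> hval c \<and> hval c \<le> 2"
  by (cases c) auto

lemma KC_double_tile_balance:
  assumes "t \<in> KC_double_tiles"
  shows "hval (top_col t) = 2 * hval (bottom_col t) + carry (left_col t) - carry (right_col t)"
    and "hval (bottom_col t) \<le> 1"
    and "left_col t \<in> {S0, S1}" "right_col t \<in> {S0, S1}"
  using assms
  unfolding KC_double_tiles_def left_col_def right_col_def top_col_def bottom_col_def by auto

lemma KC_third_tile_balance:
  assumes "t \<in> KC_third_tiles"
  shows "hval (top_col t) = hval (bottom_col t) / 3 + carry (right_col t) - carry (left_col t)"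
    and "1 \<le> hval (bottom_col t)"
    and "left_col t \<notin> {S0, S1}" "right_col t \<notin> {S0, S1}"
  using assms
  unfolding KC_third_tiles_def left_col_def right_col_def top_col_def bottom_col_def by auto

lemma int_shift_invariant_pred:
  fixes P :: "int \<Rightarrow> bool"
  assumes "\<And>k. P (k + 1) = P k"
  shows "P k = P 0"
proof (induction k rule: int_induct[where k = 0])
  case (step1 i)
  then show ?case using assms[of i] by simp
next
  case (step2 i)
  then show ?case using assms[of "i - 1"] by simp
qed simp

text \<open>The vertical colours of the two subsets are disjoint, so a row never switches subset.\<close>

lemma KC_row_uniform:
  assumes "is_tiling KC_tiles \<tau>"
  shows "(\<forall>k. \<tau> (k, i) \<in> KC_double_tiles) \<or> (\<forall>k. \<tau> (k, i) \<in> KC_third_tiles)"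
proof -
  have tile: "\<tau> (k, i) \<in> KC_double_tiles \<or> \<tau> (k, i) \<in> KC_third_tiles" for k
    using assms KC_tiles_split unfolding is_tiling_def by auto
  have double_iff: "\<tau> (k, i) \<in> KC_double_tiles \<longleftrightarrow> left_col (\<tau> (k, i)) \<in> {S0, S1}" for k
    using tile[of k] KC_double_tile_balance KC_third_tile_balance by blast
  have "left_col (\<tau> (k + 1, i)) \<in> {S0, S1} \<longleftrightarrow> left_col (\<tau> (k, i)) \<in> {S0, S1}" for k
    using tile[of k] KC_double_tile_balance KC_third_tile_balance assms
    unfolding is_tiling_def by metis
  then have "\<tau> (k, i) \<in> KC_double_tiles \<longleftrightarrow> \<tau> (0, i) \<in> KC_double_tiles" for k
    unfolding double_iff by (rule int_shift_invariant_pred)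
  then show ?thesis using tile by blast
qed

definition row_values :: "(int \<times> int \<Rightarrow> tile) \<Rightarrow> int \<Rightarrow> int \<Rightarrow> real" where
  "row_values \<tau> i k = hval (top_col (\<tau> (k, i)))"

lemma row_values_abs_le: "\<bar>row_values \<tau> i k\<bar> \<le> 2"
  using hval_bounds unfolding row_values_def by (simp add: abs_le_iff)

lemma KC_double_row_coboundary:
  assumes "is_tiling KC_tiles \<tau>" and "\<And>k. \<tau> (k, i + 1) \<in> KC_double_tiles"
  shows "row_values \<tau> (i + 1) k = 2 * row_values \<tau> i k
           + carry (left_col (\<tau> (k, i + 1))) - carry (left_col (\<tau> (k + 1, i + 1)))"
    and "row_values \<tau> i k \<le> 1"
  using KC_double_tile_balance[OF assms(2)[of k]] assms(1)
  unfolding is_tiling_def row_values_def by metis+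

lemma KC_third_row_coboundary:
  assumes "is_tiling KC_tiles \<tau>" and "\<And>k. \<tau> (k, i + 1) \<in> KC_third_tiles"
  shows "row_values \<tau> (i + 1) k = row_values \<tau> i k / 3
           + carry (left_col (\<tau> (k + 1, i + 1))) - carry (left_col (\<tau> (k, i + 1)))"
    and "1 \<le> row_values \<tau> i k"
  using KC_third_tile_balance[OF assms(2)[of k]] assms(1)
  unfolding is_tiling_def row_values_def by metis+

lemma KC_row_means_step:
  assumes "is_tiling KC_tiles \<tau>"
  shows "double_or_third_step (lower_mean (row_values \<tau> i)) (upper_mean (row_values \<tau> i))
           (lower_mean (row_values \<tau> (i + 1))) (upper_mean (row_values \<tau> (i + 1)))"
  using KC_row_uniform[OF assms, of "i + 1"]
proof
  let ?h = "\<lambda>k. carry (left_col (\<tau> (k, i + 1)))"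
  assume "\<forall>k. \<tau> (k, i + 1) \<in> KC_double_tiles"
  note row = KC_double_row_coboundary[OF assms this[rule_format]]
  have "upper_mean (row_values \<tau> i) \<le> 1"
    by (rule upper_mean_le[OF row(2) row_values_abs_le])
  moreover have "lower_mean (row_values \<tau> (i + 1)) = 2 * lower_mean (row_values \<tau> i)"
    and "upper_mean (row_values \<tau> (i + 1)) = 2 * upper_mean (row_values \<tau> i)"
    by (rule lower_mean_coboundary_scale[where h = ?h, OF row_values_abs_le carry_abs_le _ row(1)],
        simp)
      (rule upper_mean_coboundary_scale[where h = ?h, OF row_values_abs_le carry_abs_le _ row(1)],
        simp)
  ultimately show ?thesis by (simp add: double_or_third_step_def)
next
  let ?h = "\<lambda>k. - carry (left_col (\<tau> (k, i + 1)))"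
  assume "\<forall>k. \<tau> (k, i + 1) \<in> KC_third_tiles"
  note row = KC_third_row_coboundary[OF assms this[rule_format]]
  have coboundary: "row_values \<tau> (i + 1) k = 1 / 3 * row_values \<tau> i k + ?h k - ?h (k + 1)" for k
    using row(1)[of k] by simp
  have "\<bar>?h k\<bar> \<le> 1" for k using carry_abs_le by simp
  note scale = lower_mean_coboundary_scale[where h = ?h, OF row_values_abs_le this _ coboundary]
    upper_mean_coboundary_scale[where h = ?h, OF row_values_abs_le this _ coboundary]
  have "1 \<le> lower_mean (row_values \<tau> i)"
    by (rule lower_mean_ge[OF row(2) row_values_abs_le])
  moreover have "upper_mean (row_values \<tau> i) \<le> 2"
    using hval_bounds by (intro upper_mean_le[OF _ row_values_abs_le]) (simp add: row_values_def)
  ultimately show ?thesis using scale by (simp add: double_or_third_step_def)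
qed

lemma KC_row_lower_mean_eq_upper_mean:
  assumes "is_tiling KC_tiles \<tau>"
  shows "lower_mean (row_values \<tau> j) = upper_mean (row_values \<tau> j)"
proof -
  have "0 \<le> lower_mean (row_values \<tau> j)"
    using hval_bounds by (intro lower_mean_ge[OF _ row_values_abs_le]) (simp add: row_values_def)
  moreover have "lower_mean (row_values \<tau> j) \<le> upper_mean (row_values \<tau> j)"
    by (rule lower_mean_le_upper_mean[OF row_values_abs_le])
  moreover have "double_or_third_step
      (lower_mean (row_values \<tau> (j + int n))) (upper_mean (row_values \<tau> (j + int n)))
      (lower_mean (row_values \<tau> (j + int (Suc n)))) (upper_mean (row_values \<tau> (j + int (Suc n))))"
    for n
  proof -
    have succ: "j + int (Suc n) = j + int n + 1" by simp
    show ?thesis unfolding succ by (rule KC_row_means_step[OF assms])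
  qed
  ultimately show ?thesis
    using double_or_third_pair_collapse[where x = "\<lambda>n. lower_mean (row_values \<tau> (j + int n))"
        and y = "\<lambda>n. upper_mean (row_values \<tau> (j + int n))"] by simp
qed

theorem mainTheorem4:
  fixes \<tau> :: "int \<times> int \<Rightarrow> tile" and j :: int
  assumes "is_tiling KC_tiles \<tau>"
  defines "u \<equiv> (\<lambda>k::int. hval (top_col (\<tau> (k, j))))"
  shows "\<exists>x::real. \<forall>\<epsilon>>0. \<exists>N::int. N > 0 \<and> (\<forall>a b::int. N \<le> b - a \<longrightarrow>
            \<bar>(\<Sum>k\<in>{a..<b}. u k) / real_of_int (b - a) - x\<bar> < \<epsilon>)"
proof -
  have "u = row_values \<tau> j" unfolding u_def row_values_def ..
  then show ?thesis
    using interval_average_uniformly_convergent[OF row_values_abs_le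
        KC_row_lower_mean_eq_upper_mean[OF assms(1)]] by auto
qed

end
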